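(* Let $n\in\mathbb{N}_{\geq 2}$, $k_n=\lceil\log_2 n\rceil$, and suppose $n\neq 3\cdot 2^{k_n-2}$. Then the GFB trees $T_{n-1}^{gfb},T_n^{gfb},T_{n+1}^{gfb}$ have a common maximal pending subtree which is fully balanced: (i) if $n\in(2^{k_n-1},3\cdot2^{k_n-2})$, this common subtree is the fully balanced tree of height $k_n-2$; (ii) if $n\in(3\cdot2^{k_n-2},2^{k_n}]$, it is the fully balanced tree of height $k_n-1$.
   Context: A rooted binary tree with $n\geq 2$ leaves is a rooted tree whose root has degree 2 and all other internal nodes have degree 3; for $n=1$ it is a single node. Trees are considered up to isomorphism. The maximal pending subtrees of a tree with at least 2 leaves are the two subtrees rooted at the children of the root. The fully balanced tree of height $k$ is the rooted binary tree with $2^k$ leaves all at depth $k$. The GFB tree $T_n^{gfb}$ is the output of: start with $n$ single-node trees; while more than one tree remains, remove a tree $u$ of minimal size (number of leaves), then remove a tree $v$ of minimal size among the remaining ones, and insert the tree with a new root whose children are the roots of $u$ and $v$; output the remaining tree. *)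

theory Defs
  imports Complex_Main "HOL-Library.Multiset"
begin

text \<open>Rooted binary trees (ordered representation; isomorphism = swapping children).\<close>
datatype btree = BLeaf | BNode btree btree

fun leaves :: "btree \<Rightarrow> nat" where
  "leaves BLeaf = 1"
| "leaves (BNode l r) = leaves l + leaves r"

inductive iso :: "btree \<Rightarrow> btree \<Rightarrow> bool" where
  iso_leaf: "iso BLeaf BLeaf"
| iso_node: "iso l l' \<Longrightarrow> iso r r' \<Longrightarrow> iso (BNode l r) (BNode l' r')"
| iso_swap: "iso l r' \<Longrightarrow> iso r l' \<Longrightarrow> iso (BNode l r) (BNode l' r')"

fun fb :: "nat \<Rightarrow> btree" where
  "fb 0 = BLeaf"
| "fb (Suc k) = BNode (fb k) (fb k)"

text \<open>S is (isomorphic to) a maximal pending subtree of T. Convention for the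
  single-node tree (only relevant for T_1 when n = 2): its pending subtree is itself.\<close>
fun has_mps :: "btree \<Rightarrow> btree \<Rightarrow> bool" where
  "has_mps BLeaf S = iso BLeaf S"
| "has_mps (BNode l r) S = (iso l S \<or> iso r S)"

inductive gfb_step :: "btree multiset \<Rightarrow> btree multiset \<Rightarrow> bool" where
  "u \<in># M \<Longrightarrow> (\<forall>w\<in>#M. leaves u \<le> leaves w) \<Longrightarrow>
   v \<in># M - {#u#} \<Longrightarrow> (\<forall>w\<in>#M - {#u#}. leaves v \<le> leaves w) \<Longrightarrow>
   gfb_step M (add_mset (BNode u v) (M - {#u#} - {#v#}))"

definition gfb_tree :: "nat \<Rightarrow> btree \<Rightarrow> bool" where
  "gfb_tree n T \<longleftrightarrow> gfb_step\<^sup>*\<^sup>* (replicate_mset n BLeaf) {#T#}"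

end

theory Submission
  imports Defs
begin

text \<open>Every forest produced by GFB is two-level: it consists of copies of \<^term>\<open>fb j\<close> and
  \<^term>\<open>fb (Suc j)\<close> for some \<open>j\<close>, plus at most one tree whose number of leaves lies strictly
  between \<open>2^j\<close> and \<open>2^(j+1)\<close>. Hence the last step joins two trees of such a forest, and the
  number of leaves \<open>N\<close> decides which fully balanced tree is among them: if
  \<open>2^(j+1) \<le> N < 2^(j+2)\<close>, it is \<^term>\<open>fb j\<close> when \<open>N \<le> 3 * 2^j\<close> and \<^term>\<open>fb (Suc j)\<close> when
  \<open>3 * 2^j \<le> N\<close>. Unless \<open>n = 3 * 2^(k-2)\<close>, the three numbers \<open>n - 1, n, n + 1\<close> fall on the same
  side of this threshold.\<close>

lemma leaves_fb [simp]: "leaves (fb j) = 2 ^ j"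
  by (induction j) auto

lemma fb_eq_iff [simp]: "fb i = fb j \<longleftrightarrow> i = j"
  by (metis leaves_fb power_inject_exp one_less_numeral_iff semiring_norm(76))

lemma iso_refl: "iso t t"
  by (induction t) (auto intro: iso.intros)

declare fb.simps(2) [simp del]

lemma gfb_stepE:
  assumes "gfb_step M M'"
  obtains u v K where "M = add_mset u (add_mset v K)" "M' = add_mset (BNode u v) K"
    "\<forall>w\<in>#M. leaves u \<le> leaves w" "\<forall>w\<in>#add_mset v K. leaves v \<le> leaves w"
  using assms
proof cases
  case (1 u v)
  then show thesis
    using that[of u v "M - {#u#} - {#v#}"] by (metis insert_DiffM)
qed

lemma gfb_step_size_ge2: "gfb_step M M' \<Longrightarrow> 2 \<le> size M"
  by (elim gfb_stepE) simp

lemma gfb_step_leaves: "gfb_step M M' \<Longrightarrow> (\<Sum>t\<in>#M'. leaves t) = (\<Sum>t\<in>#M. leaves t)"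
  by (elim gfb_stepE) simp

lemma gfb_step_picks:
  assumes "gfb_step (add_mset x (add_mset y K)) M'"
    and "\<And>w. w \<in># add_mset x (add_mset y K) \<Longrightarrow> leaves w \<le> leaves x \<Longrightarrow> w = x"
    and "\<And>w. w \<in># add_mset y K \<Longrightarrow> leaves w \<le> leaves y \<Longrightarrow> w = y"
  shows "M' = add_mset (BNode x y) K"
  using assms(1)
proof (rule gfb_stepE)
  fix u v K'
  assume M: "add_mset x (add_mset y K) = add_mset u (add_mset v K')"
    and M': "M' = add_mset (BNode u v) K'"
    and u: "\<forall>w\<in>#add_mset x (add_mset y K). leaves u \<le> leaves w"
    and v: "\<forall>w\<in>#add_mset v K'. leaves v \<le> leaves w"
  have "u = x"
    using assms(2)[of u] u M by (metis add_mset_commute union_single_eq_member)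
  with M have vK': "add_mset v K' = add_mset y K"
    by simp
  have "v = y"
    using assms(3)[of v] v vK' by (metis union_single_eq_member)
  with vK' \<open>u = x\<close> M' show ?thesis
    by simp
qed

abbreviation fb_layers :: "nat \<Rightarrow> nat \<Rightarrow> nat \<Rightarrow> btree multiset" where
  "fb_layers j a b \<equiv> replicate_mset a (fb j) + replicate_mset b (fb (Suc j))"

definition two_level_forest :: "btree multiset \<Rightarrow> bool" where
  "two_level_forest M \<longleftrightarrow> (\<exists>j a b. M = fb_layers j a b \<or>
     (\<exists>r. M = add_mset r (fb_layers j a b) \<and> 2 ^ j < leaves r \<and> leaves r < 2 ^ Suc j))"

lemma two_level_forest_layers: "two_level_forest (fb_layers j a b)"
  unfolding two_level_forest_def by blast

lemma two_level_forest_add: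
  "2 ^ j < leaves r \<Longrightarrow> leaves r < 2 ^ Suc j \<Longrightarrow> two_level_forest (add_mset r (fb_layers j a b))"
  unfolding two_level_forest_def by blast

lemma gfb_step_layers:
  assumes "gfb_step (fb_layers j a b) M'"
  shows "two_level_forest M'"
proof -
  have "2 \<le> a + b"
    using gfb_step_size_ge2[OF assms] by simp
  then consider c where "a = Suc (Suc c)" | c where "a = 1" "b = Suc c" | c where "a = 0" "b = Suc (Suc c)"
    by (metis One_nat_def add_2_eq_Suc le_Suc_ex not0_implies_Suc plus_1_eq_Suc add_0 Suc_le_mono)
  then show ?thesis
  proof cases
    case (1 c)
    have "M' = add_mset (BNode (fb j) (fb j)) (fb_layers j c b)"
      by (rule gfb_step_picks) (use assms 1 in \<open>auto split: if_splits\<close>)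
    then show ?thesis
      using two_level_forest_layers[where j = j and a = c and b = "Suc b"] by (simp flip: fb.simps(2))
  next
    case (2 c)
    have "M' = add_mset (BNode (fb j) (fb (Suc j))) (fb_layers (Suc j) c 0)"
      by (rule gfb_step_picks) (use assms 2 in \<open>auto simp: add_mset_commute split: if_splits\<close>)
    then show ?thesis
      using two_level_forest_add[where j = "Suc j" and a = c and b = 0] by simp
  next
    case (3 c)
    have "M' = add_mset (BNode (fb (Suc j)) (fb (Suc j))) (fb_layers (Suc j) c 0)"
      by (rule gfb_step_picks) (use assms 3 in \<open>auto split: if_splits\<close>)
    then show ?thesis
      using two_level_forest_layers[where j = "Suc j" and a = c and b = 1] by (simp flip: fb.simps(2))
  qed
qed

lemma gfb_step_layers_add:
  assumes "gfb_step (add_mset r (fb_layers j a b)) M'"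
    and r: "2 ^ j < leaves r" "leaves r < 2 ^ Suc j"
  shows "two_level_forest M'"
proof -
  have "1 \<le> a + b"
    using gfb_step_size_ge2[OF assms(1)] by simp
  then consider c where "a = Suc (Suc c)" | "a = 1" | c where "a = 0" "b = Suc c"
    by (metis One_nat_def le_Suc_ex not0_implies_Suc plus_1_eq_Suc add_0)
  then show ?thesis
  proof cases
    case (1 c)
    have "M' = add_mset (BNode (fb j) (fb j)) (add_mset r (fb_layers j c b))"
      by (rule gfb_step_picks) (use assms 1 in \<open>auto simp: add_mset_commute split: if_splits\<close>)
    then show ?thesis
      using two_level_forest_add[where j = j and a = c and b = "Suc b"] r
      by (simp add: add_mset_commute flip: fb.simps(2))
  next
    case 2
    have "M' = add_mset (BNode (fb j) r) (fb_layers (Suc j) b 0)"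
      by (rule gfb_step_picks) (use assms 2 in \<open>auto simp: add_mset_commute split: if_splits\<close>)
    then show ?thesis
      using two_level_forest_add[where j = "Suc j" and a = b and b = 0] r by simp
  next
    case (3 c)
    have "M' = add_mset (BNode r (fb (Suc j))) (fb_layers (Suc j) c 0)"
      by (rule gfb_step_picks) (use assms 3 in \<open>auto split: if_splits\<close>)
    then show ?thesis
      using two_level_forest_add[where j = "Suc j" and a = c and b = 0] r by simp
  qed
qed

lemma two_level_forest_gfb_step:
  "two_level_forest M \<Longrightarrow> gfb_step M M' \<Longrightarrow> two_level_forest M'"
  unfolding two_level_forest_def[of M] using gfb_step_layers gfb_step_layers_add by blast

lemma gfb_reachable_two_level:
  assumes "gfb_step\<^sup>*\<^sup>* (replicate_mset N BLeaf) M"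
  shows "two_level_forest M \<and> (\<Sum>t\<in>#M. leaves t) = N"
  using assms
proof (induction rule: rtranclp_induct)
  case base
  show ?case
    using two_level_forest_layers[where j = 0 and a = N and b = 0] by simp
next
  case (step M M')
  then show ?case
    using two_level_forest_gfb_step gfb_step_leaves by metis
qed

lemma two_level_pair_contains_fb:
  assumes "two_level_forest M" "size M = 2"
    and N: "(\<Sum>t\<in>#M. leaves t) = N" "2 ^ Suc j \<le> N" "N < 2 ^ Suc (Suc j)"
  shows "(N \<le> 3 * 2 ^ j \<longrightarrow> fb j \<in># M) \<and> (3 * 2 ^ j \<le> N \<longrightarrow> fb (Suc j) \<in># M)"
proof -
  have level: "l = j" if "2 ^ Suc l \<le> N" "N < 2 ^ Suc (Suc l)" for l
    using floor_log_nat_eq_if[of 2 "Suc l" N] floor_log_nat_eq_if[of 2 "Suc j" N] that N by simp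
  from assms(1) consider (layers) l a b where "M = fb_layers l a b"
    | (add) l a b r where "M = add_mset r (fb_layers l a b)" "2 ^ l < leaves r" "leaves r < 2 ^ Suc l"
    unfolding two_level_forest_def by blast
  then show ?thesis
  proof cases
    case layers
    with assms(2) consider "a = 2" "b = 0" | "a = 1" "b = 1" | "a = 0" "b = 2"
      by fastforce
    then show ?thesis
    proof cases
      case 1
      with layers N(1) have "M = {#fb l, fb l#}" "N = 2 ^ Suc l"
        by (simp_all add: numeral_2_eq_2)
      then show ?thesis
        using level[of l] by simp
    next
      case 2
      with layers N(1) have "N = 3 * 2 ^ l"
        by simp
      then have "l = j"
        by (intro level) simp_all
      then show ?thesis
        using layers 2 by simp
    next
      case 3
      with layers N(1) have "M = {#fb (Suc l), fb (Suc l)#}" "N = 2 ^ Suc (Suc l)"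
        by (simp_all add: numeral_2_eq_2)
      moreover from this(2) have "j = Suc l"
        using level[of "Suc l"] by simp
      ultimately show ?thesis
        by simp
    qed
  next
    case add
    with assms(2) consider "a = 1" "b = 0" | "a = 0" "b = 1"
      by fastforce
    then show ?thesis
    proof cases
      case 1
      with add N(1) have "l = j"
        using level by simp
      then show ?thesis
        using add 1 N(1) by simp
    next
      case 2
      with add N(1) have "l = j"
        using level by simp
      then show ?thesis
        using add 2 N(1) by simp
    qed
  qed
qed

lemma gfb_tree_last_step:
  assumes "gfb_tree N T" "2 \<le> N"
  obtains u v where "gfb_step\<^sup>*\<^sup>* (replicate_mset N BLeaf) {#u, v#}" "T = BNode u v"
proof -
  from assms(1) have "gfb_step\<^sup>*\<^sup>* (replicate_mset N BLeaf) {#T#}"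
    unfolding gfb_tree_def .
  then show thesis
  proof (cases rule: rtranclp.cases)
    case rtrancl_refl
    then have "size (replicate_mset N BLeaf) = size {#T#}"
      by simp
    with assms(2) show thesis
      by simp
  next
    case (rtrancl_into_rtrancl M)
    from \<open>gfb_step M {#T#}\<close> obtain u v K
      where "M = add_mset u (add_mset v K)" "{#T#} = add_mset (BNode u v) K"
      by (rule gfb_stepE)
    then have "M = {#u, v#}" "T = BNode u v"
      by (auto simp: single_eq_add_mset)
    with rtrancl_into_rtrancl(1) show thesis
      using that by simp
  qed
qed

lemma gfb_tree_has_mps_fb:
  assumes "gfb_tree N T" "2 ^ Suc j \<le> N" "N < 2 ^ Suc (Suc j)"
  shows "(N \<le> 3 * 2 ^ j \<longrightarrow> has_mps T (fb j)) \<and> (3 * 2 ^ j \<le> N \<longrightarrow> has_mps T (fb (Suc j)))"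
proof -
  have "2 \<le> N"
    using assms(2) order_trans[of 2 "2 ^ Suc j" N] by simp
  then obtain u v where reach: "gfb_step\<^sup>*\<^sup>* (replicate_mset N BLeaf) {#u, v#}" and T: "T = BNode u v"
    using assms(1) gfb_tree_last_step by blast
  have "(N \<le> 3 * 2 ^ j \<longrightarrow> fb j \<in># {#u, v#}) \<and> (3 * 2 ^ j \<le> N \<longrightarrow> fb (Suc j) \<in># {#u, v#})"
    using gfb_reachable_two_level[OF reach] assms(2,3) by (intro two_level_pair_contains_fb) auto
  moreover have "has_mps T S" if "S \<in># {#u, v#}" for S
    using that T iso_refl by auto
  ultimately show ?thesis
    by blast
qed

lemma gfb_tree_has_mps_fb_lower:
  assumes "gfb_tree N T" "2 ^ Suc i \<le> N" "N \<le> 3 * 2 ^ i"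
  shows "has_mps T (fb i)"
proof -
  have "N < 2 ^ Suc (Suc i)"
    using assms(3) by (simp add: order_le_less_trans)
  then show ?thesis
    using gfb_tree_has_mps_fb[OF assms(1,2)] assms(3) by blast
qed

lemma gfb_tree_has_mps_fb_upper:
  assumes "gfb_tree N T" "3 * 2 ^ i \<le> N" "N \<le> 2 ^ Suc (Suc i)"
  shows "has_mps T (fb (Suc i))"
proof (cases "N = 2 ^ Suc (Suc i)")
  case True
  then show ?thesis
    using gfb_tree_has_mps_fb[OF assms(1), of "Suc i"] by simp
next
  case False
  then show ?thesis
    using gfb_tree_has_mps_fb[OF assms(1), of i] assms(2,3) by simp
qed

lemma gfb_tree_1: "gfb_tree 1 T \<Longrightarrow> T = BLeaf"
  unfolding gfb_tree_def
  by (erule converse_rtranclpE) (auto dest: gfb_step_size_ge2)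

lemma ceiling_log2_nat:
  fixes n :: nat
  assumes "2 \<le> n"
  obtains m where "nat \<lceil>log 2 (real n)\<rceil> = Suc m" "2 ^ m < n" "n \<le> 2 ^ Suc m"
proof -
  define m where "m = nat \<lceil>log 2 (real n)\<rceil> - 1"
  have "0 < log 2 (real n)"
    using assms by simp
  then have ceiling: "\<lceil>log 2 (real n)\<rceil> = int m + 1"
    unfolding m_def by linarith
  then have "nat \<lceil>log 2 (real n)\<rceil> = Suc m"
    by simp
  with ceiling show thesis
    using that ceiling_log_nat_eq_powr_iff[of 2 n m] assms by simp
qed

lemma gfb_consecutive_has_mps_fb_lower:
  assumes "gfb_tree (n - 1) T1" "gfb_tree n T2" "gfb_tree (n + 1) T3"
    and "2 ^ Suc j < n" "n < 3 * 2 ^ j"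
  shows "has_mps T1 (fb j) \<and> has_mps T2 (fb j) \<and> has_mps T3 (fb j)"
  using assms gfb_tree_has_mps_fb_lower by simp

lemma gfb_consecutive_has_mps_fb_upper:
  assumes "gfb_tree (n - 1) T1" "gfb_tree n T2" "gfb_tree (n + 1) T3"
    and "3 * 2 ^ j < n" "n \<le> 2 ^ Suc (Suc j)"
  shows "has_mps T1 (fb (Suc j)) \<and> has_mps T2 (fb (Suc j)) \<and> has_mps T3 (fb (Suc j))"
proof -
  have "has_mps T3 (fb (Suc j))"
  proof (cases "n = 2 ^ Suc (Suc j)")
    case True
    then show ?thesis
      using assms(3) gfb_tree_has_mps_fb_lower[where i = "Suc j"] by simp
  next
    case False
    then show ?thesis
      using assms(3-5) gfb_tree_has_mps_fb_upper by simp
  qed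
  then show ?thesis
    using assms(1,2,4,5) gfb_tree_has_mps_fb_upper by simp
qed

theorem corollary1:
  fixes n k :: nat and T1 T2 T3 :: btree
  assumes "n \<ge> 2"
    and "k = nat \<lceil>log 2 (real n)\<rceil>"
    and "real n \<noteq> 3 * 2 powr (real k - 2)"
    and "gfb_tree (n - 1) T1" and "gfb_tree n T2" and "gfb_tree (n + 1) T3"
  shows "(2 powr (real k - 1) < real n \<and> real n < 3 * 2 powr (real k - 2) \<longrightarrow>
            has_mps T1 (fb (k - 2)) \<and> has_mps T2 (fb (k - 2)) \<and> has_mps T3 (fb (k - 2)))
       \<and> (3 * 2 powr (real k - 2) < real n \<and> real n \<le> 2 powr (real k) \<longrightarrow>
            has_mps T1 (fb (k - 1)) \<and> has_mps T2 (fb (k - 1)) \<and> has_mps T3 (fb (k - 1)))"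
proof (cases "n = 2")
  case True
  have "T1 = BLeaf"
    using assms(4) True by (intro gfb_tree_1) simp
  then have "has_mps T1 (fb 0)"
    by (simp add: iso_refl)
  moreover have "has_mps T2 (fb 0)" "has_mps T3 (fb 0)"
    using assms(5,6) True gfb_tree_has_mps_fb_lower[where i = 0] by simp_all
  moreover have "k = 1"
    using assms(2) True by simp
  ultimately show ?thesis
    by (simp add: powr_minus)
next
  case False
  obtain m where "k = Suc m" and n: "2 ^ m < n" "n \<le> 2 ^ Suc m"
    using ceiling_log2_nat assms(1,2) by blast
  moreover from n False assms(1) obtain j where "m = Suc j"
    by (cases m) auto
  ultimately have k: "k = Suc (Suc j)" and n: "2 ^ Suc j < n" "n \<le> 2 ^ Suc (Suc j)"
    by simp_all
  have powr: "2 powr (real k - 1) = real (2 ^ Suc j)" "3 * 2 powr (real k - 2) = real (3 * 2 ^ j)"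
    "2 powr real k = real (2 ^ Suc (Suc j))"
    unfolding k by (simp_all add: powr_add flip: powr_realpow)
  show ?thesis
    unfolding powr of_nat_less_iff of_nat_le_iff
    using gfb_consecutive_has_mps_fb_lower[OF assms(4-6)] gfb_consecutive_has_mps_fb_upper[OF assms(4-6)] n
    by (simp add: k)
qed

end
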